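(* Let $E\in\mathcal E^{m,n}_{a,b}$, $A\subseteq[m]$ and $B\subseteq[n]$, and let $E'=E\cup(A\times[n])\cup([m]\times B)$. Then $E'\in\mathcal E^{m,n}_{a',b'}$, where $a'=\min(a+|A|,m)$ and $b'=\min(b+|B|,n)$.
   Context: For an $(m,m-a)$-code $C_1$ and an $(n,n-b)$-code $C_2$, the tensor code $C_1\otimes C_2$ consists of $m\times n$ arrays whose columns lie in $C_1$ and rows in $C_2$. An erasure pattern $E\subseteq[m]\times[n]$ is correctable if every codeword is determined by its entries outside $E$. $\mathcal E^{m,n}_{a,b}$ (over a fixed field characteristic) is the set of patterns $E\subseteq[m]\times[n]$ correctable by an $(m,n,a,b)$-maximally recoverable tensor code, i.e. by $C_1\otimes C_2$ where $C_1,C_2$ have generic generator matrices of sizes $(m-a)\times m$ and $(n-b)\times n$; when $a=m$ or $b=n$ the code is zero and every pattern is correctable. *)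

theory Defs
  imports Main
begin

text \<open>Indices are 0-based: [m] is {0..<m}. Vectors of length n are functions
nat => 'k vanishing outside {0..<n}; m x n arrays are functions nat => nat => 'k
vanishing outside {0..<m} x {0..<n}.\<close>

definition row_code :: "nat \<Rightarrow> nat \<Rightarrow> (nat \<Rightarrow> nat \<Rightarrow> 'k::field) \<Rightarrow> (nat \<Rightarrow> 'k) set" where
  "row_code k n G = {v. \<exists>u. \<forall>j. v j = (if j < n then (\<Sum>i<k. u i * G i j) else 0)}"

definition tensor_code :: "nat \<Rightarrow> nat \<Rightarrow> (nat \<Rightarrow> 'k::field) set \<Rightarrow> (nat \<Rightarrow> 'k) set
    \<Rightarrow> (nat \<Rightarrow> nat \<Rightarrow> 'k) set" where
  "tensor_code m n C1 C2 = {c. (\<forall>j<n. (\<lambda>i. c i j) \<in> C1) \<and> (\<forall>i<m. (\<lambda>j. c i j) \<in> C2)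
        \<and> (\<forall>i j. (m \<le> i \<or> n \<le> j) \<longrightarrow> c i j = 0)}"

definition correctable :: "nat \<Rightarrow> nat \<Rightarrow> (nat \<Rightarrow> nat \<Rightarrow> 'k) set \<Rightarrow> (nat \<times> nat) set \<Rightarrow> bool" where
  "correctable m n C E = (\<forall>c\<in>C. \<forall>c'\<in>C.
      (\<forall>i<m. \<forall>j<n. (i, j) \<notin> E \<longrightarrow> c i j = c' i j) \<longrightarrow> c = c')"

inductive_set polyfun :: "(('v \<Rightarrow> 'k::comm_ring_1) \<Rightarrow> 'k) set" where
  const: "(\<lambda>x. c) \<in> polyfun"
| var: "(\<lambda>x. x v) \<in> polyfun"
| add: "f \<in> polyfun \<Longrightarrow> g \<in> polyfun \<Longrightarrow> (\<lambda>x. f x + g x) \<in> polyfun"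
| mult: "f \<in> polyfun \<Longrightarrow> g \<in> polyfun \<Longrightarrow> (\<lambda>x. f x * g x) \<in> polyfun"

definition generically :: "(('v \<Rightarrow> 'k::comm_ring_1) \<Rightarrow> bool) \<Rightarrow> bool" where
  "generically P = (\<exists>f\<in>polyfun. (\<exists>x. f x \<noteq> 0) \<and> (\<forall>x. f x \<noteq> 0 \<longrightarrow> P x))"

text \<open>The set of erasure patterns E \<subseteq> [m] x [n] correctable by the (m,n,a,b)-maximally
recoverable tensor code over 'k: C1 \<otimes> C2 with generic generator matrices of sizes
(m-a) x m (entries x (Inl (i,j))) and (n-b) x n (entries x (Inr (i,j))).\<close>
definition MR_patterns :: "'k::field itself \<Rightarrow> nat \<Rightarrow> nat \<Rightarrow> nat \<Rightarrow> nat \<Rightarrow> (nat \<times> nat) set set" where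
  "MR_patterns _ m n a b = {E. E \<subseteq> {0..<m} \<times> {0..<n} \<and>
     (m \<le> a \<or> n \<le> b \<or>
      generically (\<lambda>x :: (nat \<times> nat) + (nat \<times> nat) \<Rightarrow> 'k.
        correctable m n
          (tensor_code m n (row_code (m - a) m (\<lambda>i j. x (Inl (i, j))))
                           (row_code (n - b) n (\<lambda>i j. x (Inr (i, j))))) E))}"

end

theory Submission
  imports Defs "Jordan_Normal_Form.Determinant" "HOL-Computational_Algebra.Polynomial"
begin

text \<open>Transposing arrays exchanges the roles of the two component codes, so it suffices to
erase one more row r while lowering the dimension of the column code by one. Let Y be a
generic k x m generator matrix, let X_k be a further generic row and put
X_i = Y_i - Y_ir e_r + Y_ir X_k for i < k. Clearing the r-th coordinate maps the code of Y
into the code of the (k+1) x m matrix X, since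
sum u_i (Y_i - Y_ir e_r) = sum u_i X_i - (sum u_i Y_ir) X_k. Hence a codeword of C_Y \<otimes> C_2
vanishing outside E \<union> ({r} x [n]) becomes, after clearing row r, a codeword of C_X \<otimes> C_2
vanishing outside E, so it is zero off row r; each of its columns is then a codeword of C_Y
supported on coordinate r, which is zero as soon as the minor of Y omitting column r is
nonsingular. Finally (Y, X_k) \<mapsto> X is a polynomial substitution whose image contains every X
with X_kr \<noteq> 0, and over an infinite field two nonzero polynomials have a common non-root, so
the genericity of X pulls back to genericity of Y.\<close>

lemma polyfun_finite_support:
  assumes "f \<in> polyfun"
  shows "\<exists>V. finite V \<and> (\<forall>x y. (\<forall>v\<in>V. x v = y v) \<longrightarrow> f x = f y)"
  using assms
proof (induction rule: polyfun.induct)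
  case (const c)
  then show ?case by auto
next
  case (var v)
  then show ?case by (intro exI[of _ "{v}"]) auto
next
  case (add f g)
  then obtain V W where "finite V" "\<forall>x y. (\<forall>v\<in>V. x v = y v) \<longrightarrow> f x = f y"
    "finite W" "\<forall>x y. (\<forall>v\<in>W. x v = y v) \<longrightarrow> g x = g y" by blast
  then show ?case by (intro exI[of _ "V \<union> W"]) (simp, metis UnI1 UnI2)
next
  case (mult f g)
  then obtain V W where "finite V" "\<forall>x y. (\<forall>v\<in>V. x v = y v) \<longrightarrow> f x = f y"
    "finite W" "\<forall>x y. (\<forall>v\<in>W. x v = y v) \<longrightarrow> g x = g y" by blast
  then show ?case by (intro exI[of _ "V \<union> W"]) (simp, metis UnI1 UnI2)
qed

lemma polyfun_fun_upd_poly: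
  assumes "f \<in> polyfun"
  shows "\<exists>p. \<forall>t. f (x(v := t)) = poly p t"
  using assms
proof (induction rule: polyfun.induct)
  case (const c)
  then show ?case by (intro exI[of _ "[:c:]"]) auto
next
  case (var w)
  show ?case
  proof (cases "w = v")
    case True
    then show ?thesis by (intro exI[of _ "[:0, 1:]"]) auto
  next
    case False
    then show ?thesis by (intro exI[of _ "[:x w:]"]) auto
  qed
next
  case (add f g)
  then obtain p q where "\<forall>t. f (x(v := t)) = poly p t" "\<forall>t. g (x(v := t)) = poly q t" by blast
  then show ?case by (intro exI[of _ "p + q"]) (metis poly_add)
next
  case (mult f g)
  then obtain p q where "\<forall>t. f (x(v := t)) = poly p t" "\<forall>t. g (x(v := t)) = poly q t" by blast
  then show ?case by (intro exI[of _ "p * q"]) (metis poly_mult)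
qed

lemma polyfun_common_nonzero_finite_diff:
  fixes f g :: "('v \<Rightarrow> 'k::field) \<Rightarrow> 'k"
  assumes inf: "infinite (UNIV :: 'k set)" and f: "f \<in> polyfun" and g: "g \<in> polyfun"
    and "finite D" and "\<forall>v. v \<notin> D \<longrightarrow> x0 v = x1 v" and "f x0 \<noteq> 0" and "g x1 \<noteq> 0"
  shows "\<exists>x. f x \<noteq> 0 \<and> g x \<noteq> 0"
  using assms(4-7)
proof (induction D arbitrary: x0 x1 rule: finite_induct)
  case empty
  then have "x0 = x1" by auto
  with empty show ?case by auto
next
  case (insert v D)
  obtain p where p: "\<And>t. f (x0(v := t)) = poly p t" using polyfun_fun_upd_poly[OF f] by blast
  obtain q where q: "\<And>t. g (x1(v := t)) = poly q t" using polyfun_fun_upd_poly[OF g] by blast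
  have "p \<noteq> 0" using p[of "x0 v"] insert.prems(2) by auto
  moreover have "q \<noteq> 0" using q[of "x1 v"] insert.prems(3) by auto
  ultimately have "finite ({t. poly p t = 0} \<union> {t. poly q t = 0})" by (simp add: poly_roots_finite)
  then obtain t where "poly p t \<noteq> 0" "poly q t \<noteq> 0" using ex_new_if_finite[OF inf] by blast
  then have "f (x0(v := t)) \<noteq> 0" and "g (x1(v := t)) \<noteq> 0" using p q by auto
  moreover have "\<forall>w. w \<notin> D \<longrightarrow> (x0(v := t)) w = (x1(v := t)) w" using insert.prems(1) by auto
  ultimately show ?case using insert.IH by blast
qed

lemma polyfun_common_nonzero:
  fixes f g :: "('v \<Rightarrow> 'k::field) \<Rightarrow> 'k"
  assumes inf: "infinite (UNIV :: 'k set)" and f: "f \<in> polyfun" and g: "g \<in> polyfun"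
    and "f x0 \<noteq> 0" and "g x1 \<noteq> 0"
  shows "\<exists>x. f x \<noteq> 0 \<and> g x \<noteq> 0"
proof -
  obtain W where "finite W" and W: "\<And>x y. \<forall>v\<in>W. x v = y v \<Longrightarrow> g x = g y"
    using polyfun_finite_support[OF g] by blast
  define x2 where "x2 v = (if v \<in> W then x1 v else x0 v)" for v
  have "g x2 \<noteq> 0" using W[of x2 x1] \<open>g x1 \<noteq> 0\<close> by (simp add: x2_def)
  moreover have "\<forall>v. v \<notin> W \<longrightarrow> x0 v = x2 v" by (simp add: x2_def)
  ultimately show ?thesis
    using polyfun_common_nonzero_finite_diff[OF inf f g \<open>finite W\<close>] \<open>f x0 \<noteq> 0\<close> by blast
qed

lemma polyfun_sum:
  assumes "\<And>p. p \<in> S \<Longrightarrow> F p \<in> polyfun"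
  shows "(\<lambda>x. \<Sum>p\<in>S. F p x) \<in> polyfun"
proof (cases "finite S")
  case True
  then show ?thesis using assms
    by (induction S rule: finite_induct) (auto intro: polyfun.intros)
qed (simp add: polyfun.const)

lemma polyfun_prod:
  assumes "\<And>p. p \<in> S \<Longrightarrow> F p \<in> polyfun"
  shows "(\<lambda>x. \<Prod>p\<in>S. F p x) \<in> polyfun"
proof (cases "finite S")
  case True
  then show ?thesis using assms
    by (induction S rule: finite_induct) (auto intro: polyfun.intros)
qed (simp add: polyfun.const)

lemma polyfun_compose:
  assumes "f \<in> polyfun" and "\<And>v. (\<lambda>x. \<rho> x v) \<in> polyfun"
  shows "(\<lambda>x. f (\<rho> x)) \<in> polyfun"
  using assms by (induction rule: polyfun.induct) (auto intro: polyfun.intros)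

lemma polyfun_det:
  fixes M :: "nat \<Rightarrow> nat \<Rightarrow> ('v \<Rightarrow> 'k::comm_ring_1) \<Rightarrow> 'k"
  assumes "\<And>i j. M i j \<in> polyfun"
  shows "(\<lambda>x. det (mat k k (\<lambda>(i, j). M i j x))) \<in> polyfun"
proof -
  have "(\<lambda>x. \<Sum>p\<in>{p. p permutes {0..<k}}. signof p * (\<Prod>i = 0..<k. M i (p i) x)) \<in> polyfun"
    by (intro polyfun_sum polyfun.mult polyfun.const polyfun_prod assms)
  moreover have "det (mat k k (\<lambda>(i, j). M i j x)) =
      (\<Sum>p\<in>{p. p permutes {0..<k}}. signof p * (\<Prod>i = 0..<k. M i (p i) x))" for x
    unfolding det_def'[of "mat k k (\<lambda>(i, j). M i j x)" k, OF mat_carrier]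
    by (intro sum.cong refl arg_cong2[where f = "(*)"] prod.cong) (auto simp: permutes_def)
  ultimately show ?thesis by simp
qed

lemma generically_mono:
  assumes "generically P" and "\<And>x. P x \<Longrightarrow> Q x"
  shows "generically Q"
  using assms unfolding generically_def by blast

lemma generically_nonzero:
  assumes "f \<in> polyfun" and "f x \<noteq> 0"
  shows "generically (\<lambda>x. f x \<noteq> 0)"
  using assms unfolding generically_def by blast

lemma generically_conj:
  fixes P Q :: "('v \<Rightarrow> 'k::field) \<Rightarrow> bool"
  assumes inf: "infinite (UNIV :: 'k set)" and "generically P" and "generically Q"
  shows "generically (\<lambda>x. P x \<and> Q x)"
proof -
  obtain f x0 where f: "f \<in> polyfun" "f x0 \<noteq> 0" "\<And>x. f x \<noteq> 0 \<Longrightarrow> P x"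
    using \<open>generically P\<close> unfolding generically_def by blast
  obtain g x1 where g: "g \<in> polyfun" "g x1 \<noteq> 0" "\<And>x. g x \<noteq> 0 \<Longrightarrow> Q x"
    using \<open>generically Q\<close> unfolding generically_def by blast
  have "(\<lambda>x. f x * g x) \<in> polyfun" using f(1) g(1) by (rule polyfun.mult)
  moreover have "\<exists>x. f x \<noteq> 0 \<and> g x \<noteq> 0"
    by (rule polyfun_common_nonzero[of f g, OF inf f(1) g(1) f(2) g(2)])
  then obtain x where "f x \<noteq> 0" and "g x \<noteq> 0" by blast
  then have "f x * g x \<noteq> 0" by simp
  ultimately show ?thesis
    unfolding generically_def using f(3) g(3) by (intro bexI[of _ "\<lambda>x. f x * g x"]) auto
qed

lemma generically_comp:
  assumes "f \<in> polyfun" and "f (\<rho> z) \<noteq> 0" and "\<And>y. f y \<noteq> 0 \<Longrightarrow> P y"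
    and "\<And>v. (\<lambda>x. \<rho> x v) \<in> polyfun"
  shows "generically (\<lambda>x. P (\<rho> x))"
  unfolding generically_def
proof (intro bexI[of _ "\<lambda>x. f (\<rho> x)"] conjI)
  show "\<exists>x. f (\<rho> x) \<noteq> 0" using assms(2) by blast
  show "\<forall>x. f (\<rho> x) \<noteq> 0 \<longrightarrow> P (\<rho> x)" using assms(3) by blast
  show "(\<lambda>x. f (\<rho> x)) \<in> polyfun" using assms(1,4) by (rule polyfun_compose)
qed

lemma generically_comp_surj:
  assumes "generically P" and "\<And>v. (\<lambda>x. \<rho> x v) \<in> polyfun" and "surj \<rho>"
  shows "generically (\<lambda>x. P (\<rho> x))"
proof -
  obtain f y where f: "f \<in> polyfun" "f y \<noteq> 0" "\<And>y. f y \<noteq> 0 \<Longrightarrow> P y"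
    using \<open>generically P\<close> unfolding generically_def by blast
  obtain x where "\<rho> x = y" using \<open>surj \<rho>\<close> by (metis surjD)
  with f(2) show ?thesis by (intro generically_comp[OF f(1) _ f(3) assms(2), where z = x]) simp
qed

lemma generically_pullback:
  fixes \<rho> :: "('u \<Rightarrow> 'k::field) \<Rightarrow> 'v \<Rightarrow> 'k"
  assumes inf: "infinite (UNIV :: 'k set)" and "generically P"
    and "\<And>v. (\<lambda>x. \<rho> x v) \<in> polyfun" and "generically (\<lambda>y. y \<in> range \<rho>)"
  shows "generically (\<lambda>x. P (\<rho> x))"
proof -
  obtain h y where h: "h \<in> polyfun" "h y \<noteq> 0" "\<And>y. h y \<noteq> 0 \<Longrightarrow> P y \<and> y \<in> range \<rho>"
    using generically_conj[OF inf assms(2,4)] unfolding generically_def by blast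
  then obtain x where "\<rho> x = y" by blast
  with h(2) show ?thesis
    by (intro generically_comp[OF h(1) _ _ assms(3), where z = x]) (simp_all add: h(3))
qed

lemma det_ne_zero_mult_vec_eq_zero:
  fixes M :: "nat \<Rightarrow> nat \<Rightarrow> 'k::field"
  assumes "det (mat k k (\<lambda>(i, j). M i j)) \<noteq> 0" and "\<forall>i<k. (\<Sum>j<k. M i j * u j) = 0"
  shows "\<forall>j<k. u j = 0"
proof -
  let ?M = "mat k k (\<lambda>(i, j). M i j)"
  have "?M *\<^sub>v vec k u = 0\<^sub>v k"
    using assms(2) by (intro eq_vecI) (auto simp: scalar_prod_def row_def atLeast0LessThan)
  moreover have "\<not> (\<exists>v. v \<in> carrier_vec k \<and> v \<noteq> 0\<^sub>v k \<and> ?M *\<^sub>v v = 0\<^sub>v k)"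
    using det_0_iff_vec_prod_zero_field[of ?M k] assms(1) by (simp only: mat_carrier simp_thms)
  ultimately have "vec k u = 0\<^sub>v k" using vec_carrier[of k u] by blast
  then show ?thesis by (metis index_vec index_zero_vec(1))
qed

lemma row_code_diff:
  assumes "v \<in> row_code k n G" and "w \<in> row_code k n G"
  shows "(\<lambda>j. v j - w j) \<in> row_code k n G"
proof -
  obtain u where u: "\<forall>j. v j = (if j < n then (\<Sum>i<k. u i * G i j) else 0)"
    using assms(1) unfolding row_code_def by blast
  obtain u' where u': "\<forall>j. w j = (if j < n then (\<Sum>i<k. u' i * G i j) else 0)"
    using assms(2) unfolding row_code_def by blast
  have "\<forall>j. v j - w j = (if j < n then (\<Sum>i<k. (u i - u' i) * G i j) else 0)"
    using u u' by (simp add: left_diff_distrib sum_subtractf)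
  then show ?thesis unfolding row_code_def mem_Collect_eq by (rule exI[of _ "\<lambda>i. u i - u' i"])
qed

lemma row_code_zero: "(\<lambda>j. 0) \<in> row_code k n G"
  unfolding row_code_def by (intro CollectI exI[of _ "\<lambda>_. 0"]) simp

lemma tensor_code_diff:
  assumes "c \<in> tensor_code m n (row_code k1 m G1) (row_code k2 n G2)"
    and "c' \<in> tensor_code m n (row_code k1 m G1) (row_code k2 n G2)"
  shows "(\<lambda>i j. c i j - c' i j) \<in> tensor_code m n (row_code k1 m G1) (row_code k2 n G2)"
  using assms unfolding tensor_code_def by (auto intro: row_code_diff)

lemma tensor_code_zero: "(\<lambda>i j. 0) \<in> tensor_code m n (row_code k1 m G1) (row_code k2 n G2)"
  unfolding tensor_code_def using row_code_zero by auto

lemma correctable_iff_zero: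
  fixes C :: "(nat \<Rightarrow> nat \<Rightarrow> 'k::ab_group_add) set"
  assumes diff: "\<And>c c'. c \<in> C \<Longrightarrow> c' \<in> C \<Longrightarrow> (\<lambda>i j. c i j - c' i j) \<in> C"
    and zero: "(\<lambda>i j. 0) \<in> C"
  shows "correctable m n C E \<longleftrightarrow>
    (\<forall>c\<in>C. (\<forall>i<m. \<forall>j<n. (i, j) \<notin> E \<longrightarrow> c i j = 0) \<longrightarrow> c = (\<lambda>i j. 0))"
proof (intro iffI ballI impI)
  fix c assume corr: "correctable m n C E" and "c \<in> C"
    and vanish: "\<forall>i<m. \<forall>j<n. (i, j) \<notin> E \<longrightarrow> c i j = 0"
  show "c = (\<lambda>i j. 0)"
    using corr[unfolded correctable_def, rule_format, OF \<open>c \<in> C\<close> zero] vanish by simp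
next
  assume only_zero: "\<forall>c\<in>C. (\<forall>i<m. \<forall>j<n. (i, j) \<notin> E \<longrightarrow> c i j = 0) \<longrightarrow> c = (\<lambda>i j. 0)"
  show "correctable m n C E"
    unfolding correctable_def
  proof (intro ballI impI)
    fix c c' assume "c \<in> C" "c' \<in> C" and agree: "\<forall>i<m. \<forall>j<n. (i, j) \<notin> E \<longrightarrow> c i j = c' i j"
    have "(\<lambda>i j. c i j - c' i j) = (\<lambda>i j. 0)"
      by (rule mp[OF only_zero[THEN bspec, OF diff[OF \<open>c \<in> C\<close> \<open>c' \<in> C\<close>]]])
        (use agree in auto)
    then show "c = c'" by (auto simp: fun_eq_iff)
  qed
qed

lemma correctable_tensor_row_code_iff:
  "correctable m n (tensor_code m n (row_code k1 m G1) (row_code k2 n G2)) E \<longleftrightarrow>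
    (\<forall>c\<in>tensor_code m n (row_code k1 m G1) (row_code k2 n G2).
      (\<forall>i<m. \<forall>j<n. (i, j) \<notin> E \<longrightarrow> c i j = 0) \<longrightarrow> c = (\<lambda>i j. 0))"
  using tensor_code_diff tensor_code_zero by (rule correctable_iff_zero)

lemma tensor_code_clear_row:
  assumes "\<And>v. v \<in> C1 \<Longrightarrow> (\<lambda>i. if i = r then 0 else v i) \<in> C1'" and "(\<lambda>j. 0) \<in> C2"
    and "c \<in> tensor_code m n C1 C2"
  shows "(\<lambda>i j. if i = r then 0 else c i j) \<in> tensor_code m n C1' C2"
  unfolding tensor_code_def
proof (intro CollectI conjI allI impI)
  fix j assume "j < n"
  then show "(\<lambda>i. if i = r then 0 else c i j) \<in> C1'"
    using assms(1,3) unfolding tensor_code_def by blast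
next
  fix i assume "i < m"
  then show "(\<lambda>j. if i = r then 0 else c i j) \<in> C2"
    using assms(2,3) unfolding tensor_code_def by (cases "i = r") auto
next
  fix i j assume "m \<le> i \<or> n \<le> j"
  then show "(if i = r then 0 else c i j) = 0" using assms(3) unfolding tensor_code_def by auto
qed

definition skip_index :: "nat \<Rightarrow> nat \<Rightarrow> nat" where
  "skip_index r l = (if l < r then l else Suc l)"

lemma row_code_clear_entry:
  fixes X Y :: "nat \<Rightarrow> nat \<Rightarrow> 'k::field"
  assumes X: "\<forall>i<k. \<forall>j<m. X i j = (if j = r then 0 else Y i j) + Y i r * X k j"
    and v: "v \<in> row_code k m Y"
  shows "(\<lambda>j. if j = r then 0 else v j) \<in> row_code (Suc k) m X"
proof -
  obtain u where u: "\<And>j. v j = (if j < m then (\<Sum>p<k. u p * Y p j) else 0)"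
    using v unfolding row_code_def by blast
  define u' where "u' p = (if p < k then u p else - (\<Sum>p<k. u p * Y p r))" for p
  have "(if j = r then 0 else v j) = (if j < m then (\<Sum>p<Suc k. u' p * X p j) else 0)" for j
  proof (cases "j < m")
    case True
    have "(\<Sum>p<Suc k. u' p * X p j) = (\<Sum>p<k. u p * X p j) - (\<Sum>p<k. u p * Y p r) * X k j"
      by (simp add: u'_def)
    also have "(\<Sum>p<k. u p * X p j) =
        (\<Sum>p<k. u p * (if j = r then 0 else Y p j) + u p * Y p r * X k j)"
      using X True by (intro sum.cong) (auto simp: algebra_simps)
    also have "\<dots> = (\<Sum>p<k. u p * (if j = r then 0 else Y p j)) + (\<Sum>p<k. u p * Y p r) * X k j"
      by (simp add: sum.distrib sum_distrib_right)
    finally show ?thesis using True u by auto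
  next
    case False
    then show ?thesis using u by simp
  qed
  then show ?thesis unfolding row_code_def by blast
qed

lemma row_code_eq_zero_if_minor_nonsingular:
  fixes Y :: "nat \<Rightarrow> nat \<Rightarrow> 'k::field"
  assumes det: "det (mat k k (\<lambda>(l, p). Y p (skip_index r l))) \<noteq> 0" and "k < m"
    and v: "v \<in> row_code k m Y" and vanish: "\<forall>j. j \<noteq> r \<longrightarrow> v j = 0"
  shows "v = (\<lambda>j. 0)"
proof -
  obtain u where u: "\<And>j. v j = (if j < m then (\<Sum>p<k. u p * Y p j) else 0)"
    using v unfolding row_code_def by blast
  have "\<forall>l<k. (\<Sum>p<k. Y p (skip_index r l) * u p) = 0"
  proof (intro allI impI)
    fix l assume "l < k"
    then have "skip_index r l < m" and "skip_index r l \<noteq> r"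
      using \<open>k < m\<close> by (auto simp: skip_index_def)
    then show "(\<Sum>p<k. Y p (skip_index r l) * u p) = 0"
      using u[of "skip_index r l"] vanish by (simp add: mult.commute)
  qed
  then have "\<forall>p<k. u p = 0"
    using det_ne_zero_mult_vec_eq_zero[of k "\<lambda>l p. Y p (skip_index r l)"] det by blast
  then have "v r = 0" using u[of r] by simp
  show ?thesis
  proof
    fix j show "v j = 0" using vanish \<open>v r = 0\<close> by (cases "j = r") auto
  qed
qed

lemma correctable_add_row:
  fixes X Y :: "nat \<Rightarrow> nat \<Rightarrow> 'k::field"
  assumes X: "\<forall>i<k. \<forall>j<m. X i j = (if j = r then 0 else Y i j) + Y i r * X k j"
    and det: "det (mat k k (\<lambda>(l, p). Y p (skip_index r l))) \<noteq> 0" and "k < m"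
    and corr: "correctable m n (tensor_code m n (row_code (Suc k) m X) (row_code l n G)) E"
  shows "correctable m n (tensor_code m n (row_code k m Y) (row_code l n G)) (E \<union> {r} \<times> {0..<n})"
  unfolding correctable_tensor_row_code_iff
proof (intro ballI impI)
  fix c assume c: "c \<in> tensor_code m n (row_code k m Y) (row_code l n G)"
    and vanish: "\<forall>i<m. \<forall>j<n. (i, j) \<notin> E \<union> {r} \<times> {0..<n} \<longrightarrow> c i j = 0"
  let ?c' = "\<lambda>i j. if i = r then 0 else c i j"
  have "?c' \<in> tensor_code m n (row_code (Suc k) m X) (row_code l n G)"
    using tensor_code_clear_row[OF row_code_clear_entry[OF X] row_code_zero c] .
  then have "(\<forall>i<m. \<forall>j<n. (i, j) \<notin> E \<longrightarrow> ?c' i j = 0) \<longrightarrow> ?c' = (\<lambda>i j. 0)"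
    by (rule bspec[OF corr[unfolded correctable_tensor_row_code_iff]])
  moreover have "\<forall>i<m. \<forall>j<n. (i, j) \<notin> E \<longrightarrow> ?c' i j = 0" using vanish by auto
  ultimately have "?c' = (\<lambda>i j. 0)" by (rule mp)
  then have off_r: "c i j = 0" if "i \<noteq> r" for i j
    using fun_cong[OF fun_cong[OF \<open>?c' = (\<lambda>i j. 0)\<close>, of i], of j] that by simp
  have "(\<lambda>i. c i j) = (\<lambda>i. 0)" for j
  proof (cases "j < n")
    case True
    then have "(\<lambda>i. c i j) \<in> row_code k m Y" using c unfolding tensor_code_def by blast
    then show ?thesis
      by (rule row_code_eq_zero_if_minor_nonsingular[OF det \<open>k < m\<close>]) (simp add: off_r)
  next
    case False
    then show ?thesis using c unfolding tensor_code_def by auto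
  qed
  then show "c = (\<lambda>i j. 0)" by (auto simp: fun_eq_iff)
qed

type_synonym 'k generators = "(nat \<times> nat) + (nat \<times> nat) \<Rightarrow> 'k"

text \<open>The variables Inl (i, j) hold the entries Y_ij (i < k) of a k x m generator matrix together
with a further row X_kj (i = k); the substitution replaces Y_ij by
X_ij = Y_ij [j \<noteq> r] + Y_ir X_kj and keeps X_k, giving a (k+1) x m generator matrix X.\<close>

definition augment_subst ::
    "nat \<Rightarrow> nat \<Rightarrow> nat \<Rightarrow> ('k::field) generators \<Rightarrow> 'k generators" where
  "augment_subst k m r x v = (case v of
      Inl (i, j) \<Rightarrow> if i < k \<and> j < m
        then (if j = r then 0 else x (Inl (i, j))) + x (Inl (i, r)) * x (Inl (k, j)) else x v
    | Inr _ \<Rightarrow> x v)"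

lemma augment_subst_Inl [simp]:
  "augment_subst k m r x (Inl (i, j)) = (if i < k \<and> j < m
     then (if j = r then 0 else x (Inl (i, j))) + x (Inl (i, r)) * x (Inl (k, j)) else x (Inl (i, j)))"
  by (simp add: augment_subst_def)

lemma augment_subst_Inr [simp]: "augment_subst k m r x (Inr p) = x (Inr p)"
  by (simp add: augment_subst_def)

lemma polyfun_augment_subst: "(\<lambda>x. augment_subst k m r x v) \<in> polyfun"
proof (cases v)
  case (Inl ij)
  then obtain i j where "v = Inl (i, j)" by (cases ij) auto
  then show ?thesis
    by (cases "i < k \<and> j < m"; cases "j = r") (auto intro!: polyfun.intros)
next
  case (Inr p)
  then show ?thesis by (simp add: polyfun.var)
qed

lemma augment_subst_range:
  fixes y :: "('k::field) generators"
  assumes "r < m" and "y (Inl (k, r)) \<noteq> 0"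
  shows "y \<in> range (augment_subst k m r)"
proof -
  let ?w = "y (Inl (k, r))"
  define x where "x v = (case v of
      Inl (i, j) \<Rightarrow> if i < k \<and> j < m
        then (if j = r then y (Inl (i, r)) / ?w else y (Inl (i, j)) - y (Inl (i, r)) / ?w * y (Inl (k, j)))
        else y v
    | Inr _ \<Rightarrow> y v)" for v
  have "augment_subst k m r x v = y v" for v
  proof (cases v)
    case (Inl ij)
    then show ?thesis using assms by (cases ij) (auto simp: x_def)
  qed (simp add: x_def)
  then show ?thesis by (metis ext rangeI)
qed

lemma generically_range_augment_subst:
  assumes "r < m"
  shows "generically (\<lambda>y :: ('k::field) generators. y \<in> range (augment_subst k m r))"
proof -
  have "generically (\<lambda>y :: 'k generators. y (Inl (k, r)) \<noteq> 0)"
    by (rule generically_nonzero[where f = "\<lambda>y. y (Inl (k, r))" and x = "\<lambda>_. 1"])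
      (simp_all add: polyfun.var)
  then show ?thesis by (rule generically_mono) (rule augment_subst_range[OF \<open>r < m\<close>])
qed

lemma generically_minor_nonzero:
  "generically (\<lambda>x :: ('k::field) generators.
     det (mat k k (\<lambda>(l, p). x (Inl (p, skip_index r l)))) \<noteq> 0)"
proof (rule generically_nonzero)
  show "(\<lambda>x :: 'k generators. det (mat k k (\<lambda>(l, p). x (Inl (p, skip_index r l))))) \<in> polyfun"
    by (rule polyfun_det) (rule polyfun.var)
  let ?x = "\<lambda>v. case v of Inl (p, j) \<Rightarrow> if j = skip_index r p then 1 else 0 | Inr _ \<Rightarrow> (0 :: 'k)"
  have "mat k k (\<lambda>(l, p). ?x (Inl (p, skip_index r l))) = 1\<^sub>m k"
    by (rule eq_matI) (auto simp: skip_index_def)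
  then show "det (mat k k (\<lambda>(l, p). ?x (Inl (p, skip_index r l)))) \<noteq> 0" by simp
qed

definition MR_code ::
    "nat \<Rightarrow> nat \<Rightarrow> nat \<Rightarrow> nat \<Rightarrow> ('k::field) generators \<Rightarrow> (nat \<Rightarrow> nat \<Rightarrow> 'k) set" where
  "MR_code m n a b x = tensor_code m n (row_code (m - a) m (\<lambda>i j. x (Inl (i, j))))
                                       (row_code (n - b) n (\<lambda>i j. x (Inr (i, j))))"

lemma MR_patterns_iff:
  "E \<in> MR_patterns TYPE('k::field) m n a b \<longleftrightarrow> E \<subseteq> {0..<m} \<times> {0..<n} \<and>
     (m \<le> a \<or> n \<le> b \<or> generically (\<lambda>x :: 'k generators. correctable m n (MR_code m n a b x) E))"
  unfolding MR_patterns_def MR_code_def by simp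

lemma generically_correctable_add_row:
  assumes inf: "infinite (UNIV :: 'k::field set)" and "a < m" and "r < m"
    and gen: "generically (\<lambda>x :: 'k generators. correctable m n (MR_code m n a b x) E)"
  shows "generically (\<lambda>x :: 'k generators.
    correctable m n (MR_code m n (Suc a) b x) (E \<union> {r} \<times> {0..<n}))"
proof -
  define k where "k = m - Suc a"
  have "m - a = Suc k" and "k < m" using \<open>a < m\<close> by (auto simp: k_def)
  have "generically (\<lambda>x :: 'k generators. correctable m n (MR_code m n a b (augment_subst k m r x)) E)"
    using inf gen polyfun_augment_subst generically_range_augment_subst[OF \<open>r < m\<close>]
    by (rule generically_pullback)
  then have "generically (\<lambda>x :: 'k generators.
      correctable m n (MR_code m n a b (augment_subst k m r x)) E
      \<and> det (mat k k (\<lambda>(l, p). x (Inl (p, skip_index r l)))) \<noteq> 0)"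
    using generically_minor_nonzero by (rule generically_conj[OF inf])
  then show ?thesis
  proof (rule generically_mono)
    fix x :: "'k generators"
    assume "correctable m n (MR_code m n a b (augment_subst k m r x)) E
      \<and> det (mat k k (\<lambda>(l, p). x (Inl (p, skip_index r l)))) \<noteq> 0"
    then show "correctable m n (MR_code m n (Suc a) b x) (E \<union> {r} \<times> {0..<n})"
      unfolding MR_code_def \<open>m - a = Suc k\<close> k_def[symmetric]
      by (intro correctable_add_row[where X = "\<lambda>i j. augment_subst k m r x (Inl (i, j))"])
        (auto simp: \<open>k < m\<close>)
  qed
qed

lemma MR_patterns_add_row:
  assumes inf: "infinite (UNIV :: 'k::field set)"
    and E: "E \<in> MR_patterns TYPE('k) m n a b" and "r < m"
  shows "E \<union> {r} \<times> {0..<n} \<in> MR_patterns TYPE('k) m n (min (Suc a) m) b"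
proof (cases "a < m \<and> b < n")
  case True
  then show ?thesis
    using E generically_correctable_add_row[OF inf _ \<open>r < m\<close>] \<open>r < m\<close>
    by (auto simp: MR_patterns_iff min_def)
next
  case False
  then show ?thesis using E \<open>r < m\<close> by (auto simp: MR_patterns_iff)
qed

lemma MR_patterns_add_rows:
  assumes inf: "infinite (UNIV :: 'k::field set)"
    and E: "E \<in> MR_patterns TYPE('k) m n a b" and "a \<le> m" and "A \<subseteq> {0..<m}"
  shows "E \<union> A \<times> {0..<n} \<in> MR_patterns TYPE('k) m n (min (a + card A) m) b"
proof -
  have "finite A" using \<open>A \<subseteq> {0..<m}\<close> finite_subset by blast
  then show ?thesis using \<open>A \<subseteq> {0..<m}\<close>
  proof (induction A rule: finite_induct)
    case empty
    then show ?case using E \<open>a \<le> m\<close> by simp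
  next
    case (insert r A)
    then have "E \<union> A \<times> {0..<n} \<union> {r} \<times> {0..<n}
        \<in> MR_patterns TYPE('k) m n (min (Suc (min (a + card A) m)) m) b"
      by (intro MR_patterns_add_row[OF inf]) auto
    moreover have "E \<union> A \<times> {0..<n} \<union> {r} \<times> {0..<n} = E \<union> insert r A \<times> {0..<n}" by auto
    moreover have "min (Suc (min (a + card A) m)) m = min (a + card (insert r A)) m"
      using insert by simp
    ultimately show ?case by simp
  qed
qed

lemma tensor_code_transpose:
  "c \<in> tensor_code n m C2 C1 \<longleftrightarrow> (\<lambda>i j. c j i) \<in> tensor_code m n C1 C2"
  unfolding tensor_code_def mem_Collect_eq by (intro iffI; elim conjE; intro conjI) blast+

lemma correctable_transpose:
  assumes "correctable m n (tensor_code m n C1 C2) E"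
  shows "correctable n m (tensor_code n m C2 C1) (prod.swap ` E)"
  unfolding correctable_def
proof (intro ballI impI)
  fix c c' assume c: "c \<in> tensor_code n m C2 C1" and c': "c' \<in> tensor_code n m C2 C1"
    and agree: "\<forall>i<n. \<forall>j<m. (i, j) \<notin> prod.swap ` E \<longrightarrow> c i j = c' i j"
  have "(\<lambda>i j. c j i) = (\<lambda>i j. c' j i)"
    using tensor_code_transpose[THEN iffD1, OF c] tensor_code_transpose[THEN iffD1, OF c']
    by (rule assms[unfolded correctable_def, rule_format]) (use agree in simp)
  then show "c = c'" by (auto simp: fun_eq_iff)
qed

lemma MR_patterns_transpose:
  assumes "E \<in> MR_patterns TYPE('k::field) m n a b"
  shows "prod.swap ` E \<in> MR_patterns TYPE('k) n m b a"
proof (cases "m \<le> a \<or> n \<le> b")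
  case True
  then show ?thesis using assms by (auto simp: MR_patterns_iff)
next
  case False
  define swap_vars :: "'k generators \<Rightarrow> 'k generators"
    where "swap_vars x v = x (case_sum Inr Inl v)" for x v
  have gen: "generically (\<lambda>x :: 'k generators. correctable m n (MR_code m n a b x) E)"
    using assms False by (simp add: MR_patterns_iff)
  have "surj swap_vars"
    by (rule surjI[of swap_vars swap_vars]) (simp add: swap_vars_def fun_eq_iff split: sum.split)
  have "generically (\<lambda>x :: 'k generators.
      correctable m n (MR_code m n a b (swap_vars x)) E)"
    by (rule generically_comp_surj[OF gen _ \<open>surj swap_vars\<close>]) (simp add: swap_vars_def polyfun.var)
  then have "generically (\<lambda>x :: 'k generators.
      correctable n m (MR_code n m b a x) (prod.swap ` E))"
  proof (rule generically_mono)
    fix x :: "'k generators"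
    assume "correctable m n (MR_code m n a b (swap_vars x)) E"
    then have "correctable m n (tensor_code m n (row_code (m - a) m (\<lambda>i j. x (Inr (i, j))))
        (row_code (n - b) n (\<lambda>i j. x (Inl (i, j))))) E"
      by (simp add: MR_code_def swap_vars_def)
    then show "correctable n m (MR_code n m b a x) (prod.swap ` E)"
      unfolding MR_code_def by (rule correctable_transpose)
  qed
  then show ?thesis using assms by (auto simp: MR_patterns_iff)
qed

theorem lemma3p17:
  fixes E :: "(nat \<times> nat) set" and A B :: "nat set" and m n a b :: nat
  assumes "infinite (UNIV :: 'k::field set)"
    and "a \<le> m" and "b \<le> n"
    and "E \<in> MR_patterns TYPE('k) m n a b"
    and "A \<subseteq> {0..<m}" and "B \<subseteq> {0..<n}"
  shows "E \<union> (A \<times> {0..<n}) \<union> ({0..<m} \<times> B)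
           \<in> MR_patterns TYPE('k) m n (min (a + card A) m) (min (b + card B) n)"
proof -
  have "E \<union> A \<times> {0..<n} \<in> MR_patterns TYPE('k) m n (min (a + card A) m) b"
    by (rule MR_patterns_add_rows[OF assms(1,4,2,5)])
  then have "prod.swap ` (E \<union> A \<times> {0..<n}) \<union> B \<times> {0..<m}
      \<in> MR_patterns TYPE('k) n m (min (b + card B) n) (min (a + card A) m)"
    by (rule MR_patterns_add_rows[OF assms(1) MR_patterns_transpose assms(3,6)])
  then have "prod.swap ` (prod.swap ` (E \<union> A \<times> {0..<n}) \<union> B \<times> {0..<m})
      \<in> MR_patterns TYPE('k) m n (min (a + card A) m) (min (b + card B) n)"
    by (rule MR_patterns_transpose)
  then show ?thesis by (simp add: image_Un image_image product_swap)
qed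

end
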